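(* Let $\lambda>0$ and consider the problem $\min_{x\in\mathbb{R}} f(x)=\frac{\lambda}{2}x^2$, whose minimizer is $x^\star=0$. Let $a,b\in\mathbb{R}$ satisfy $a^2+4b\le 0$, and consider the optimization method $x_{k+1}=a x_k+b x_{k-1}$ ($k\ge 1$), started from arbitrary $x_0,x_1\in\mathbb{R}$. Assume the method is convergent. Then $$V(x_k,x_{k-1},x_{k-2})=x_{k-1}^2-x_k x_{k-2}$$ is a Lyapunov function for this method.
   Context: The method is called convergent if $x_k\to 0$ for every choice of initial values $x_0,x_1$; equivalently, the iteration matrix $M=\begin{bmatrix} a & b\\ 1 & 0\end{bmatrix}$ (which maps $(x_k,x_{k-1})^T$ to $(x_{k+1},x_k)^T$) has spectral radius $\rho(M)<1$. A function $V(x_k,x_{k-1},x_{k-2})$ is called a Lyapunov function for the method if, along every trajectory of the method, $V(x_k,x_{k-1},x_{k-2})\ge 0$ for all $k\ge 2$ and $V(x_{k+1},x_k,x_{k-1})\le V(x_k,x_{k-1},x_{k-2})$ for all $k\ge 2$ (i.e. it is nonnegative and monotonically non-increasing along the iterates). *)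

theory Defs
  imports Complex_Main
begin

definition trajectory :: "real \<Rightarrow> real \<Rightarrow> (nat \<Rightarrow> real) \<Rightarrow> bool" where
  "trajectory a b x \<longleftrightarrow> (\<forall>k\<ge>1. x (Suc k) = a * x k + b * x (k - 1))"

definition convergent_method :: "real \<Rightarrow> real \<Rightarrow> bool" where
  "convergent_method a b \<longleftrightarrow> (\<forall>x. trajectory a b x \<longrightarrow> x \<longlonglongrightarrow> 0)"

definition lyapunov :: "real \<Rightarrow> real \<Rightarrow> (real \<Rightarrow> real \<Rightarrow> real \<Rightarrow> real) \<Rightarrow> bool" where
  "lyapunov a b V \<longleftrightarrow> (\<forall>x. trajectory a b x \<longrightarrow>
     (\<forall>k\<ge>2. V (x k) (x (k - 1)) (x (k - 2)) \<ge> 0 \<and>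
             V (x (Suc k)) (x k) (x (k - 1)) \<le> V (x k) (x (k - 1)) (x (k - 2))))"

end

theory Submission
  imports Defs
begin

text \<open>Along any trajectory the quantity V_k = x_{k-1}^2 - x_k x_{k-2} satisfies
  V_{k+1} = -b V_k. Substituting the recursion for x_k turns V_k into the binary quadratic form
  x_{k-1}^2 - a x_{k-1} x_{k-2} - b x_{k-2}^2, which is positive semidefinite exactly when
  a^2 + 4b \<le> 0. Finally, on the trajectory with x_0 = 0, x_1 = 1 one has V_k = (-b)^{k-2}, which
  tends to 0 only if |b| < 1; so convergence of the method makes V non-increasing.\<close>

lemma trajectory_SucSuc:
  assumes "trajectory a b x"
  shows "x (Suc (Suc m)) = a * x (Suc m) + b * x m"
  using assms[unfolded trajectory_def, rule_format, of "Suc m"] by simp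

lemma trajectory_lyapunov_step:
  assumes "trajectory a b x"
  shows "x (Suc (Suc m)) ^ 2 - x (Suc (Suc (Suc m))) * x (Suc m)
       = - b * (x (Suc m) ^ 2 - x (Suc (Suc m)) * x m)"
  unfolding trajectory_SucSuc[OF assms, of "Suc m"] trajectory_SucSuc[OF assms, of m]
  by (simp add: algebra_simps power2_eq_square)

lemma trajectory_lyapunov_power:
  assumes "trajectory a b x"
  shows "x (Suc m) ^ 2 - x (Suc (Suc m)) * x m = (- b) ^ m * (x 1 ^ 2 - x 2 * x 0)"
proof (induction m)
  case 0
  show ?case by (simp add: numeral_2_eq_2)
next
  case (Suc m)
  then show ?case by (simp add: trajectory_lyapunov_step[OF assms])
qed

lemma quadratic_form_nonneg:
  fixes a b y z :: real
  assumes "a\<^sup>2 + 4 * b \<le> 0"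
  shows "0 \<le> y\<^sup>2 - (a * y + b * z) * z"
proof -
  have "0 \<le> (y - a * z / 2) ^ 2 + (- b - a\<^sup>2 / 4) * z\<^sup>2"
    using assms by (intro add_nonneg_nonneg mult_nonneg_nonneg) auto
  also have "\<dots> = y\<^sup>2 - (a * y + b * z) * z"
    by (simp add: algebra_simps power2_eq_square)
  finally show ?thesis .
qed

fun fundamental_solution :: "real \<Rightarrow> real \<Rightarrow> nat \<Rightarrow> real" where
  "fundamental_solution a b 0 = 0"
| "fundamental_solution a b (Suc 0) = 1"
| "fundamental_solution a b (Suc (Suc n)) =
     a * fundamental_solution a b (Suc n) + b * fundamental_solution a b n"

lemma trajectory_fundamental_solution: "trajectory a b (fundamental_solution a b)"
  unfolding trajectory_def
proof (intro allI impI)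
  fix k :: nat
  assume "1 \<le> k"
  then obtain m where "k = Suc m"
    by (cases k) auto
  then show "fundamental_solution a b (Suc k) =
      a * fundamental_solution a b k + b * fundamental_solution a b (k - 1)"
    by simp
qed

lemma convergent_method_abs_lt_1:
  assumes "convergent_method a b"
  shows "\<bar>b\<bar> < 1"
proof (rule ccontr)
  assume "\<not> \<bar>b\<bar> < 1"
  let ?x = "fundamental_solution a b"
  have x_lim: "?x \<longlonglongrightarrow> 0"
    using assms trajectory_fundamental_solution unfolding convergent_method_def by blast
  have "(\<lambda>m. ?x (Suc m) ^ 2 - ?x (Suc (Suc m)) * ?x m) \<longlonglongrightarrow> 0\<^sup>2 - 0 * 0"
    by (intro tendsto_intros x_lim LIMSEQ_Suc)
  then have "(\<lambda>m. (- b) ^ m) \<longlonglongrightarrow> 0"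
    using trajectory_lyapunov_power[OF trajectory_fundamental_solution]
    by (simp add: numeral_2_eq_2)
  then have "(\<lambda>m. \<bar>b\<bar> ^ m) \<longlonglongrightarrow> 0"
    using tendsto_rabs_zero_iff[of "\<lambda>m. (- b) ^ m"] by (simp add: power_abs)
  moreover have "1 \<le> \<bar>b\<bar> ^ m" for m
    using \<open>\<not> \<bar>b\<bar> < 1\<close> by (simp add: one_le_power)
  ultimately have "1 \<le> (0::real)"
    by (intro LIMSEQ_le_const) auto
  then show False by simp
qed

theorem theorem1:
  fixes lam a b :: real
  assumes "lam > 0"
    and "a\<^sup>2 + 4 * b \<le> 0"
    and "convergent_method a b"
  shows "lyapunov a b (\<lambda>xk xk1 xk2. xk1\<^sup>2 - xk * xk2)"
  unfolding lyapunov_def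
proof (intro allI impI conjI)
  \<comment> \<open>The method's iterates do not involve lam.\<close>
  fix x and k :: nat
  assume x: "trajectory a b x" and "2 \<le> k"
  then obtain m where k: "k = Suc (Suc m)"
    by (metis add_2_eq_Suc le_Suc_ex)
  have V_nonneg: "0 \<le> x (Suc m) ^ 2 - x (Suc (Suc m)) * x m"
    unfolding trajectory_SucSuc[OF x] using quadratic_form_nonneg[OF assms(2)] .
  then show "0 \<le> x (k - 1) ^ 2 - x k * x (k - 2)"
    by (simp add: k)
  have "- b \<le> 1"
    using convergent_method_abs_lt_1[OF assms(3)] by linarith
  then have "- b * (x (Suc m) ^ 2 - x (Suc (Suc m)) * x m)
      \<le> 1 * (x (Suc m) ^ 2 - x (Suc (Suc m)) * x m)"
    using V_nonneg by (rule mult_right_mono)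
  then show "x k ^ 2 - x (Suc k) * x (k - 1) \<le> x (k - 1) ^ 2 - x k * x (k - 2)"
    by (simp add: k trajectory_lyapunov_step[OF x])
qed

end
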